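(* Let $\Pi$ be a Lévy measure on $\mathbb{R}^d$ and assume $\overline{V}(t):=\int_{|y|\le t}|y|^2\,\Pi(dy)>0$ for all $t>0$. Let $g:[0,\infty)\to(0,\infty)$ be non-decreasing with $\int_0^c g(t)^{-1}dt<\infty$ for all $c>0$. Then $$\int_{|y|\le1}\frac{|y|^2}{g(\overline{V}(|y|))}\,\Pi(dy)<\infty.$$
   Context: A Lévy measure $\Pi$ satisfies $\Pi(\{0\})=0$ and $\int(1\wedge|y|^2)\Pi(dy)<\infty$; $|\cdot|$ is the Euclidean norm. *)

theory Defs
  imports "HOL-Analysis.Analysis"
begin

definition levy_measure :: "'a::euclidean_space measure \<Rightarrow> bool" where
  "levy_measure Lm \<longleftrightarrow> sets Lm = sets borel \<and> emeasure Lm {0} = 0 \<and>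
     (\<integral>\<^sup>+ y. ennreal (min 1 ((norm y)\<^sup>2)) \<partial>Lm) < \<infinity>"

definition Vbar :: "'a::euclidean_space measure \<Rightarrow> real \<Rightarrow> real" where
  "Vbar Lm t = enn2real (\<integral>\<^sup>+ y. indicator {y. norm y \<le> t} y * ennreal ((norm y)\<^sup>2) \<partial>Lm)"

end

theory Submission
  imports Defs
begin

(* Let nu be the image of |y|^2 Pi(dy), restricted to the unit ball, under y |-> V(|y|), where V = Vbar.
   Since V is the distribution function of |y| under that measure, nu[0, c] <= c for every c: nu is
   dominated by Lebesgue measure on [0, V(1)]. For the non-increasing function 1/g this yields
   int 1/g dnu <= 4 int_0^V(1) 1/g(t) dt, by comparing both sides on the dyadic blocks
   (V(1)/2^(k+1), V(1)/2^k]. *)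

lemma cofinal_incseq_real:
  fixes S :: "real set"
  assumes "S \<noteq> {}"
  obtains t :: "nat \<Rightarrow> real" where "incseq t" "range t \<subseteq> S" "\<And>u. u \<in> S \<Longrightarrow> \<exists>n. u \<le> t n"
proof (cases "\<exists>m\<in>S. \<forall>u\<in>S. u \<le> m")
  case True
  then obtain m where "m \<in> S" "\<And>u. u \<in> S \<Longrightarrow> u \<le> m" by blast
  then show ?thesis by (intro that[of "\<lambda>_. m"]) (auto simp: incseq_def)
next
  case no_max: False
  obtain e :: "nat \<Rightarrow> ereal" where e: "incseq e" "range e \<subseteq> ereal ` S" "Sup (ereal ` S) = (SUP n. e n)"
    using Sup_countable_SUP[of "ereal ` S"] assms by blast
  have e_real: "e n = ereal (real_of_ereal (e n))" for n
  proof -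
    have "e n \<in> ereal ` S" using e(2) by auto
    then show ?thesis by auto
  qed
  show ?thesis
  proof (rule that[of "\<lambda>n. real_of_ereal (e n)"])
    show "incseq (\<lambda>n. real_of_ereal (e n))"
      using e(1) e_real unfolding incseq_def by (metis ereal_less_eq(3))
    show "range (\<lambda>n. real_of_ereal (e n)) \<subseteq> S"
      using e(2) by auto
  next
    fix u assume "u \<in> S"
    with no_max obtain w where "w \<in> S" "u < w" by (meson not_le)
    then have "ereal u < Sup (ereal ` S)"
      by (meson Sup_upper ereal_less(2) image_eqI order_less_le_trans less_ereal.simps(1))
    then obtain n where "ereal u < e n" by (auto simp: e(3) less_SUP_iff)
    then show "\<exists>n. u \<le> real_of_ereal (e n)"
      using e_real[of n] by (metis ereal_less_eq(3) less_imp_le)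
  qed
qed

lemma nn_integral_indicator_le_of_sublevels:
  fixes \<phi> :: "'a \<Rightarrow> real" and f :: "'a \<Rightarrow> ennreal"
  assumes [measurable]: "\<phi> \<in> borel_measurable M" "f \<in> borel_measurable M"
    and sublevel: "\<And>x. x \<in> A \<Longrightarrow> (\<integral>\<^sup>+ y. indicator {y. \<phi> y \<le> \<phi> x} y * f y \<partial>M) \<le> c"
  shows "(\<integral>\<^sup>+ x. indicator A x * f x \<partial>M) \<le> c"
proof (cases "A = {}")
  case False
  then obtain t where t: "incseq t" "range t \<subseteq> \<phi> ` A" "\<And>u. u \<in> \<phi> ` A \<Longrightarrow> \<exists>n. u \<le> t n"
    using cofinal_incseq_real[of "\<phi> ` A"] by blast
  define F where "F = (\<lambda>n y. indicator {y. \<phi> y \<le> t n} y * f y)"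
  have "incseq F"
    using t(1) by (auto simp: F_def incseq_def le_fun_def split: split_indicator) (meson order.trans)
  have "F n \<in> borel_measurable M" for n
    unfolding F_def by measurable
  have pointwise: "indicator A x * f x \<le> (SUP n. F n x)" for x
  proof (cases "x \<in> A")
    case True
    then obtain n where "\<phi> x \<le> t n" using t(3) by blast
    then have "indicator A x * f x \<le> F n x" using True by (simp add: F_def)
    also have "\<dots> \<le> (SUP n. F n x)" by (rule SUP_upper) simp
    finally show ?thesis .
  qed simp
  have "(\<integral>\<^sup>+ x. indicator A x * f x \<partial>M) \<le> (\<integral>\<^sup>+ x. (SUP n. F n x) \<partial>M)"
    by (intro nn_integral_mono pointwise)
  also have "\<dots> = (SUP n. integral\<^sup>N M (F n))"
    by (rule nn_integral_monotone_convergence_SUP) fact+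
  also have "\<dots> \<le> c"
  proof (rule SUP_least)
    fix n
    obtain x where "x \<in> A" "t n = \<phi> x" using t(2) by blast
    then show "integral\<^sup>N M (F n) \<le> c" using sublevel by (simp add: F_def)
  qed
  finally show ?thesis .
qed simp

lemma dyadic_bracket:
  fixes a v :: real
  assumes "0 < v" "v \<le> a"
  obtains k where "a / 2 ^ Suc k < v" "v \<le> a / 2 ^ k"
proof -
  have "\<exists>n. a / 2 ^ n < v"
  proof -
    obtain n where "a / v < 2 ^ n" using real_arch_pow[of 2 "a / v"] by auto
    then show ?thesis using assms(1) by (auto simp: field_simps)
  qed
  define n where "n = (LEAST n. a / 2 ^ n < v)"
  have below: "a / 2 ^ n < v" unfolding n_def by (rule LeastI_ex) fact
  then obtain k where k: "n = Suc k" using assms(2) by (cases n) auto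
  then have "\<not> a / 2 ^ k < v" unfolding n_def by (metis lessI not_less_Least)
  with below k show ?thesis by (intro that) auto
qed

lemma disjoint_family_decseq_intervals:
  fixes c :: "nat \<Rightarrow> real"
  assumes "decseq c"
  shows "disjoint_family (\<lambda>k. {c (Suc k)<..c k})"
proof -
  have "{c (Suc n)<..c n} \<inter> {c (Suc m)<..c m} = {}" if "m < n" for m n
    using decseqD[OF assms, of "Suc m" n] that by auto
  then show ?thesis unfolding disjoint_family_on_def by (metis Int_commute linorder_neqE_nat)
qed

lemma nn_integral_le_dyadic_sum:
  fixes v :: "'a \<Rightarrow> real" and f :: "'a \<Rightarrow> ennreal" and g :: "real \<Rightarrow> real"
  assumes [measurable]: "v \<in> borel_measurable M" "f \<in> borel_measurable M"
    and "0 < a"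
    and support: "\<And>x. x \<in> space M \<Longrightarrow> f x \<noteq> 0 \<Longrightarrow> 0 < v x \<and> v x \<le> a"
    and dominated: "\<And>c. 0 < c \<Longrightarrow> (\<integral>\<^sup>+ x. indicator {x. v x \<le> c} x * f x \<partial>M) \<le> ennreal c"
    and g_pos: "\<And>t. 0 < t \<Longrightarrow> t \<le> a \<Longrightarrow> 0 < g t"
    and g_mono: "mono_on {0<..a} g"
  shows "(\<integral>\<^sup>+ x. f x * ennreal (1 / g (v x)) \<partial>M) \<le> (\<Sum>k. ennreal (a / 2 ^ k / g (a / 2 ^ Suc k)))"
proof -
  define c :: "nat \<Rightarrow> real" where "c k = a / 2 ^ k" for k
  have c_pos: "0 < c k" and c_le: "c k \<le> a" for k
    using \<open>0 < a\<close> by (auto simp: c_def field_simps)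
  define h where "h k = 1 / g (c (Suc k))" for k
  have "f x * ennreal (1 / g (v x)) \<le> (\<Sum>k. ennreal (h k) * (indicator {x. v x \<le> c k} x * f x))"
    if x: "x \<in> space M" for x
  proof (cases "f x = 0")
    case False
    with support x have v: "0 < v x" "v x \<le> a" by auto
    then obtain k where k: "c (Suc k) < v x" "v x \<le> c k"
      unfolding c_def by (rule dyadic_bracket)
    have "g (c (Suc k)) \<le> g (v x)"
      using g_mono k v c_pos[of "Suc k"] c_le[of "Suc k"] by (auto simp: mono_on_def)
    then have "1 / g (v x) \<le> h k"
      unfolding h_def using g_pos[of "c (Suc k)"] c_pos[of "Suc k"] c_le[of "Suc k"]
      by (intro divide_left_mono) auto
    then have "f x * ennreal (1 / g (v x)) \<le> ennreal (h k) * (indicator {x. v x \<le> c k} x * f x)"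
      using k by (simp add: mult.commute mult_left_mono ennreal_leI)
    also have "\<dots> \<le> (\<Sum>k. ennreal (h k) * (indicator {x. v x \<le> c k} x * f x))"
      using sum_le_suminf[OF summableI, of "{k}"] by simp
    finally show ?thesis .
  qed simp
  then have "(\<integral>\<^sup>+ x. f x * ennreal (1 / g (v x)) \<partial>M)
      \<le> (\<integral>\<^sup>+ x. (\<Sum>k. ennreal (h k) * (indicator {x. v x \<le> c k} x * f x)) \<partial>M)"
    by (rule nn_integral_mono)
  also have "\<dots> = (\<Sum>k. ennreal (h k) * (\<integral>\<^sup>+ x. indicator {x. v x \<le> c k} x * f x \<partial>M))"
    by (simp add: nn_integral_suminf nn_integral_cmult)
  also have "\<dots> \<le> (\<Sum>k. ennreal (h k) * ennreal (c k))"
    by (intro suminf_le summableI mult_left_mono dominated c_pos) auto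
  also have "\<dots> = (\<Sum>k. ennreal (a / 2 ^ k / g (a / 2 ^ Suc k)))"
  proof -
    have "ennreal (h k) * ennreal (c k) = ennreal (c k / g (c (Suc k)))" for k
      using g_pos[of "c (Suc k)"] c_pos[of k] c_pos[of "Suc k"] c_le[of "Suc k"]
      by (simp add: h_def ennreal_mult[symmetric])
    then show ?thesis by (simp add: c_def)
  qed
  finally show ?thesis .
qed

lemma dyadic_sum_le_nn_integral:
  fixes g :: "real \<Rightarrow> real"
  assumes "0 < a"
    and g_pos: "\<And>t. 0 < t \<Longrightarrow> t \<le> a \<Longrightarrow> 0 < g t"
    and g_mono: "mono_on {0<..a} g"
  shows "(\<Sum>k. ennreal (a / 2 ^ k / g (a / 2 ^ Suc k)))
    \<le> 4 * (\<integral>\<^sup>+ t. indicator {0<..a} t * ennreal (1 / g t) \<partial>lborel)"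
proof -
  define d :: "nat \<Rightarrow> real" where "d k = a / 2 ^ Suc k" for k
  define J where "J k = {d (Suc k)<..d k}" for k
  have d_pos: "0 < d k" and d_le: "d k \<le> a" for k
    using \<open>0 < a\<close> one_le_power[of "2::real" "Suc k"] by (auto simp: d_def field_simps)
  have "decseq d"
    unfolding d_def using \<open>0 < a\<close> by (intro decseq_SucI) (simp add: field_simps)
  then have disj: "disjoint_family J"
    unfolding J_def by (rule disjoint_family_decseq_intervals)
  have J_sub: "(\<Union>k. J k) \<subseteq> {0<..a}"
  proof
    fix t assume "t \<in> (\<Union>k. J k)"
    then obtain k where "d (Suc k) < t" "t \<le> d k" by (auto simp: J_def)
    then show "t \<in> {0<..a}" using d_pos[of "Suc k"] d_le[of k] by auto
  qed
  have block_integral: "ennreal (a / 2 ^ k / g (d k))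
      = 4 * (\<integral>\<^sup>+ t. ennreal (1 / g (d k)) * indicator (J k) t \<partial>lborel)" for k
  proof -
    have gap: "d k - d (Suc k) = a / 2 ^ k / 4" and "d (Suc k) \<le> d k"
      using \<open>0 < a\<close> by (simp_all add: d_def field_simps)
    have "0 < g (d k)" using g_pos d_pos d_le by blast
    then have "ennreal (a / 2 ^ k / g (d k)) = 4 * (ennreal (1 / g (d k)) * ennreal (d k - d (Suc k)))"
      using \<open>0 < a\<close> by (simp add: gap ennreal_mult[symmetric] flip: ennreal_numeral)
    then show ?thesis
      using \<open>d (Suc k) \<le> d k\<close> by (simp add: J_def nn_integral_cmult_indicator)
  qed
  have pointwise: "ennreal (1 / g (d k)) * indicator (J k) t \<le> indicator (J k) t * ennreal (1 / g t)"
    for k t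
  proof (cases "t \<in> J k")
    case True
    then have "0 < t" "t \<le> d k" using d_pos[of "Suc k"] by (auto simp: J_def)
    then have "g t \<le> g (d k)" "0 < g t"
      using g_mono g_pos d_le[of k] by (auto simp: mono_on_def)
    then have "1 / g (d k) \<le> 1 / g t" by (intro divide_left_mono) auto
    with True show ?thesis by (simp add: ennreal_leI)
  qed simp
  have "(\<Sum>k. ennreal (a / 2 ^ k / g (a / 2 ^ Suc k)))
      = 4 * (\<Sum>k. \<integral>\<^sup>+ t. ennreal (1 / g (d k)) * indicator (J k) t \<partial>lborel)"
    using block_integral by (simp add: d_def)
  also have "\<dots> = 4 * (\<integral>\<^sup>+ t. (\<Sum>k. ennreal (1 / g (d k)) * indicator (J k) t) \<partial>lborel)"
    by (simp add: J_def nn_integral_suminf)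
  also have "\<dots> \<le> 4 * (\<integral>\<^sup>+ t. (\<Sum>k. indicator (J k) t * ennreal (1 / g t)) \<partial>lborel)"
    by (intro mult_left_mono nn_integral_mono suminf_le summableI pointwise) auto
  also have "\<dots> = 4 * (\<integral>\<^sup>+ t. indicator (\<Union>k. J k) t * ennreal (1 / g t) \<partial>lborel)"
    by (simp add: suminf_indicator[OF disj])
  also have "\<dots> \<le> 4 * (\<integral>\<^sup>+ t. indicator {0<..a} t * ennreal (1 / g t) \<partial>lborel)"
    by (intro mult_left_mono nn_integral_mono mult_right_mono indicator_leI subsetD[OF J_sub]) auto
  finally show ?thesis .
qed

lemma nn_integral_le_of_dominated_distribution:
  fixes v :: "'a \<Rightarrow> real" and f :: "'a \<Rightarrow> ennreal" and g :: "real \<Rightarrow> real"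
  assumes "v \<in> borel_measurable M" "f \<in> borel_measurable M"
    and "0 < a"
    and "\<And>x. x \<in> space M \<Longrightarrow> f x \<noteq> 0 \<Longrightarrow> 0 < v x \<and> v x \<le> a"
    and "\<And>c. 0 < c \<Longrightarrow> (\<integral>\<^sup>+ x. indicator {x. v x \<le> c} x * f x \<partial>M) \<le> ennreal c"
    and "\<And>t. 0 < t \<Longrightarrow> t \<le> a \<Longrightarrow> 0 < g t"
    and "mono_on {0<..a} g"
  shows "(\<integral>\<^sup>+ x. f x * ennreal (1 / g (v x)) \<partial>M)
    \<le> 4 * (\<integral>\<^sup>+ t. indicator {0<..a} t * ennreal (1 / g t) \<partial>lborel)"
  using nn_integral_le_dyadic_sum[OF assms] dyadic_sum_le_nn_integral[OF assms(3,6,7)]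
  by (rule order_trans)

lemma sets_levy_measure: "levy_measure Lm \<Longrightarrow> sets Lm = sets borel"
  unfolding levy_measure_def by simp

lemma nn_integral_norm_sq_eq_Vbar:
  assumes "levy_measure Lm" "t \<le> 1"
  shows "(\<integral>\<^sup>+ y. indicator {y. norm y \<le> t} y * ennreal ((norm y)\<^sup>2) \<partial>Lm) = ennreal (Vbar Lm t)"
proof -
  have "(\<integral>\<^sup>+ y. indicator {y. norm y \<le> t} y * ennreal ((norm y)\<^sup>2) \<partial>Lm)
      \<le> (\<integral>\<^sup>+ y. ennreal (min 1 ((norm y)\<^sup>2)) \<partial>Lm)"
  proof (rule nn_integral_mono)
    fix y :: 'a
    have "norm y \<le> t \<Longrightarrow> (norm y)\<^sup>2 \<le> 1"
      using \<open>t \<le> 1\<close> by (simp add: power_le_one)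
    then show "indicator {y. norm y \<le> t} y * ennreal ((norm y)\<^sup>2) \<le> ennreal (min 1 ((norm y)\<^sup>2))"
      by (simp add: min_def split: split_indicator)
  qed
  also have "\<dots> < \<infinity>" using assms(1) unfolding levy_measure_def by simp
  finally show ?thesis unfolding Vbar_def by simp
qed

lemma Vbar_nonneg: "0 \<le> Vbar Lm t"
  unfolding Vbar_def by simp

lemma Vbar_mono:
  assumes "levy_measure Lm" "s \<le> t" "t \<le> 1"
  shows "Vbar Lm s \<le> Vbar Lm t"
proof -
  have "(\<integral>\<^sup>+ y. indicator {y. norm y \<le> s} y * ennreal ((norm y)\<^sup>2) \<partial>Lm)
      \<le> (\<integral>\<^sup>+ y. indicator {y. norm y \<le> t} y * ennreal ((norm y)\<^sup>2) \<partial>Lm)"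
    using assms(2) by (intro nn_integral_mono mult_right_mono indicator_leI) auto
  then show ?thesis using assms
    by (simp add: nn_integral_norm_sq_eq_Vbar Vbar_nonneg)
qed

lemma borel_measurable_Vbar_min:
  assumes "levy_measure Lm"
  shows "(\<lambda>t. Vbar Lm (min 1 t)) \<in> borel_measurable borel"
proof (intro borel_measurable_mono monoI)
  fix s t :: real assume "s \<le> t"
  then show "Vbar Lm (min 1 s) \<le> Vbar Lm (min 1 t)"
    using assms by (intro Vbar_mono) auto
qed

lemma nn_integral_Vbar_sublevel_le:
  assumes "levy_measure Lm"
  shows "(\<integral>\<^sup>+ y. indicator {y. Vbar Lm (min 1 (norm y)) \<le> c} y
      * (indicator {y. norm y \<le> 1} y * ennreal ((norm y)\<^sup>2)) \<partial>Lm) \<le> ennreal c"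
proof -
  have "(\<integral>\<^sup>+ y. indicator {y. norm y \<le> 1 \<and> Vbar Lm (norm y) \<le> c} y * ennreal ((norm y)\<^sup>2) \<partial>Lm)
      \<le> ennreal c"
  proof (rule nn_integral_indicator_le_of_sublevels)
    have "sets Lm = sets borel" using assms by (rule sets_levy_measure)
    then show "norm \<in> borel_measurable Lm" "(\<lambda>y. ennreal ((norm y)\<^sup>2)) \<in> borel_measurable Lm"
      unfolding measurable_cong_sets[OF \<open>sets Lm = sets borel\<close> refl] by measurable
  next
    fix x :: 'a assume "x \<in> {y. norm y \<le> 1 \<and> Vbar Lm (norm y) \<le> c}"
    then show "(\<integral>\<^sup>+ y. indicator {y. norm y \<le> norm x} y * ennreal ((norm y)\<^sup>2) \<partial>Lm) \<le> ennreal c"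
      using assms by (simp add: nn_integral_norm_sq_eq_Vbar ennreal_leI)
  qed
  moreover have "indicator {y. Vbar Lm (min 1 (norm y)) \<le> c} y
      * (indicator {y. norm y \<le> 1} y * ennreal ((norm y)\<^sup>2) :: ennreal)
      = indicator {y. norm y \<le> 1 \<and> Vbar Lm (norm y) \<le> c} y * ennreal ((norm y)\<^sup>2)" for y :: 'a
    by (auto simp: min_def indicator_def)
  ultimately show ?thesis by simp
qed

theorem lemma4p1:
  fixes Lm :: "'a::euclidean_space measure" and g :: "real \<Rightarrow> real"
  assumes "levy_measure Lm"
    and "\<And>t. t > 0 \<Longrightarrow> Vbar Lm t > 0"
    and "\<And>t. t \<ge> 0 \<Longrightarrow> g t > 0"
    and "mono_on {0..} g"
    and "\<And>c. c > 0 \<Longrightarrow> (\<integral>\<^sup>+ t. indicator {0..c} t * ennreal (1 / g t) \<partial>lborel) < \<infinity>"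
  shows "(\<integral>\<^sup>+ y. indicator {y. norm y \<le> 1} y * ennreal ((norm y)\<^sup>2 / g (Vbar Lm (norm y))) \<partial>Lm) < \<infinity>"
proof -
  note lm = assms(1)
  define a where "a = Vbar Lm 1"
  have "0 < a" unfolding a_def by (rule assms(2)) simp
  \<comment> \<open>Clipping at 1 makes \<open>v\<close> monotone in \<open>norm y\<close>, hence measurable; beyond 1, \<open>Vbar\<close> may be the
    junk value \<open>enn2real \<infinity> = 0\<close>.\<close>
  define v where "v y = Vbar Lm (min 1 (norm y))" for y :: 'a
  define f where "f y = indicator {y. norm y \<le> 1} y * ennreal ((norm y)\<^sup>2)" for y :: 'a
  have "sets Lm = sets borel" using lm by (rule sets_levy_measure)
  then have measurable: "v \<in> borel_measurable Lm" "f \<in> borel_measurable Lm"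
    using borel_measurable_Vbar_min[OF lm]
    unfolding v_def f_def measurable_cong_sets[OF \<open>sets Lm = sets borel\<close> refl] by measurable
  have support: "0 < v y \<and> v y \<le> a" if "f y \<noteq> 0" for y
  proof -
    from that have "norm y \<le> 1" "y \<noteq> 0" by (auto simp: f_def indicator_def)
    then show ?thesis using assms(2)[of "norm y"] Vbar_mono[OF lm, of "norm y" 1]
      by (simp add: v_def a_def min_def)
  qed
  have g_mono: "mono_on {0<..a} g" using assms(4) by (rule mono_on_subset) auto
  have "(\<integral>\<^sup>+ y. f y * ennreal (1 / g (v y)) \<partial>Lm)
      \<le> 4 * (\<integral>\<^sup>+ t. indicator {0<..a} t * ennreal (1 / g t) \<partial>lborel)"
    using \<open>0 < a\<close> support nn_integral_Vbar_sublevel_le[OF lm] assms(3) g_mono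
    by (intro nn_integral_le_of_dominated_distribution[OF measurable]) (auto simp: v_def f_def)
  also have "\<dots> \<le> 4 * (\<integral>\<^sup>+ t. indicator {0..a} t * ennreal (1 / g t) \<partial>lborel)"
    by (intro mult_left_mono nn_integral_mono mult_right_mono indicator_leI) auto
  also have "\<dots> < \<infinity>"
    using assms(5)[OF \<open>0 < a\<close>] by (simp add: ennreal_mult_less_top)
  finally have "(\<integral>\<^sup>+ y. f y * ennreal (1 / g (v y)) \<partial>Lm) < \<infinity>" .
  moreover have "indicator {y. norm y \<le> 1} y * ennreal ((norm y)\<^sup>2 / g (Vbar Lm (norm y)))
      = f y * ennreal (1 / g (v y))" for y
    using assms(3)[OF Vbar_nonneg, of Lm "norm y"]
    by (auto simp: f_def v_def min_def ennreal_mult[symmetric] split: split_indicator)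
  ultimately show ?thesis by simp
qed

end
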